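(* Let $k\ge3$ be odd and let $G$ be a connected $k$-uniform hypergraph (with at least one edge). Then $0$ is not an H-eigenvalue of the signless Laplacian tensor $\mathcal D+\mathcal A$, i.e. there is no nonzero $\mathbf x\in\mathbb R^n$ with $(\mathcal D+\mathcal A)\mathbf x^{k-1}=0$.
   Context: A $k$-uniform hypergraph $G=(V,E)$ has vertex set $V=[n]$ ($n\ge k$) and edge set $E$ of $k$-element subsets; $E_i=\{e\in E:i\in e\}$, $d_i=|E_i|$. $G$ is connected if any two distinct vertices are joined by a chain of edges with consecutive edges intersecting. $\mathcal A$: $a_{i_1\dots i_k}=\frac1{(k-1)!}$ if $\{i_1,\dots,i_k\}\in E$, else $0$; $\mathcal D$ diagonal with $d_{i\dots i}=d_i$; so $((\mathcal D+\mathcal A)\mathbf x^{k-1})_i=d_ix_i^{k-1}+\sum_{e\in E_i}\prod_{j\in e\setminus\{i\}}x_j$. An H-eigenvalue is an eigenvalue possessing a real eigenvector. *)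

theory Defs
  imports Complex_Main
begin

definition uniform_hypergraph :: "nat \<Rightarrow> nat \<Rightarrow> nat set set \<Rightarrow> bool" where
  "uniform_hypergraph n k E \<longleftrightarrow> n \<ge> k \<and> (\<forall>e\<in>E. e \<subseteq> {1..n} \<and> card e = k)"

definition edges_at :: "nat set set \<Rightarrow> nat \<Rightarrow> nat set set" where
  "edges_at E i = {e \<in> E. i \<in> e}"

definition degree :: "nat set set \<Rightarrow> nat \<Rightarrow> nat" where
  "degree E i = card (edges_at E i)"

definition hg_connected :: "nat \<Rightarrow> nat set set \<Rightarrow> bool" where
  "hg_connected n E \<longleftrightarrow>
     (\<forall>u\<in>{1..n}. \<forall>v\<in>{1..n}. u \<noteq> v \<longrightarrow>
        (\<exists>es. es \<noteq> [] \<and> set es \<subseteq> E \<and> u \<in> hd es \<and> v \<in> last es \<and>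
              (\<forall>j. Suc j < length es \<longrightarrow> es ! j \<inter> es ! Suc j \<noteq> {})))"

text \<open>The i-th component of (D + A) x^(k-1).\<close>
definition signless_lap_apply :: "nat \<Rightarrow> nat set set \<Rightarrow> (nat \<Rightarrow> real) \<Rightarrow> nat \<Rightarrow> real" where
  "signless_lap_apply k E x i =
     real (degree E i) * x i ^ (k - 1) + (\<Sum>e\<in>edges_at E i. \<Prod>j\<in>e - {i}. x j)"

definition is_H_eigenvalue_signless_lap :: "nat \<Rightarrow> nat \<Rightarrow> nat set set \<Rightarrow> real \<Rightarrow> bool" where
  "is_H_eigenvalue_signless_lap n k E lam \<longleftrightarrow>
     (\<exists>x :: nat \<Rightarrow> real. (\<exists>i\<in>{1..n}. x i \<noteq> 0) \<and>
        (\<forall>i\<in>{1..n}. signless_lap_apply k E x i = lam * x i ^ (k - 1)))"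

end

theory Submission
  imports Defs
begin

text \<open>Let \<open>x\<close> be a null vector and \<open>i\<close> a vertex maximising \<open>M = \<bar>x i\<bar>\<close>. Since \<open>k - 1\<close> is
  even, the equation at \<open>i\<close> is a sum, over the edges \<open>e\<close> through \<open>i\<close>, of the nonnegative terms
  \<open>M ^ (k - 1) + (\<Prod>l\<in>e - {i}. x l)\<close>; so each of these products equals \<open>- M ^ (k - 1)\<close>.
  This forces \<open>\<bar>x\<bar> = M\<close> on every such edge, so the same holds at each vertex \<open>j\<close> of \<open>e\<close>, and
  comparing \<open>x i * (\<Prod>l\<in>e - {i}. x l)\<close> with \<open>x j * (\<Prod>l\<in>e - {j}. x l)\<close> shows that \<open>x\<close> is
  constant on \<open>e\<close> unless \<open>M = 0\<close>. But then \<open>(\<Prod>l\<in>e - {i}. x l) = x i ^ (k - 1) = M ^ (k - 1)\<close>,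
  so \<open>M = 0\<close> after all. Connectivity supplies an edge through \<open>i\<close>.\<close>

lemma hg_connected_vertex_in_edge:
  assumes "hg_connected n E" "n \<ge> 2" "i \<in> {1..n}"
  obtains e where "e \<in> E" "i \<in> e"
proof -
  define v where "v = (if i = 1 then 2 else 1 :: nat)"
  have "v \<in> {1..n}" "v \<noteq> i"
    using assms(2) unfolding v_def by auto
  then have "\<exists>es. es \<noteq> [] \<and> set es \<subseteq> E \<and> i \<in> hd es \<and> v \<in> last es \<and>
      (\<forall>j. Suc j < length es \<longrightarrow> es ! j \<inter> es ! Suc j \<noteq> {})"
    using assms(1,3) unfolding hg_connected_def by simp
  then obtain es where "es \<noteq> []" "set es \<subseteq> E" "i \<in> hd es"
    by blast
  then show ?thesis
    using that hd_in_set by blast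
qed

lemma uniform_hypergraph_finite_edges:
  "uniform_hypergraph n k E \<Longrightarrow> finite E"
  unfolding uniform_hypergraph_def by (rule finite_subset[of E "Pow {1..n}"]) auto

lemma uniform_hypergraph_edge:
  assumes "uniform_hypergraph n k E" "e \<in> E"
  shows "finite e" "e \<subseteq> {1..n}" "card e = k"
  using assms finite_subset[of e "{1..n}"] unfolding uniform_hypergraph_def by auto

lemma prod_abs_less_power:
  fixes x :: "'a \<Rightarrow> 'b::linordered_idom"
  assumes "finite A" "j \<in> A" "\<forall>l\<in>A. \<bar>x l\<bar> \<le> M" "\<bar>x j\<bar> < M"
  shows "(\<Prod>l\<in>A. \<bar>x l\<bar>) < M ^ card A"
proof -
  have "(\<Prod>l\<in>A. \<bar>x l\<bar>) = \<bar>x j\<bar> * (\<Prod>l\<in>A - {j}. \<bar>x l\<bar>)"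
    using assms(1,2) by (simp add: prod.remove)
  also have "\<dots> \<le> \<bar>x j\<bar> * M ^ card (A - {j})"
    using assms(3) prod_mono[of "A - {j}" "\<lambda>l. \<bar>x l\<bar>" "\<lambda>_. M"]
    by (intro mult_left_mono) auto
  also have "\<dots> < M * M ^ card (A - {j})"
    using assms(4) by (intro mult_strict_right_mono) auto
  also have "\<dots> = M ^ card A"
    using assms(1,2) by (metis card_Suc_Diff1 power_Suc)
  finally show ?thesis .
qed

lemma abs_eq_if_prod_abs_eq_power:
  fixes x :: "'a \<Rightarrow> 'b::linordered_field"
  assumes "finite A" "j \<in> A" "\<forall>l\<in>A. \<bar>x l\<bar> \<le> M" "\<bar>\<Prod>l\<in>A. x l\<bar> = M ^ card A"
  shows "\<bar>x j\<bar> = M"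
proof (rule ccontr)
  assume "\<bar>x j\<bar> \<noteq> M"
  then have "\<bar>x j\<bar> < M"
    using assms(2,3) by fastforce
  then have "(\<Prod>l\<in>A. \<bar>x l\<bar>) < M ^ card A"
    by (rule prod_abs_less_power[OF assms(1-3)])
  then show False
    using assms(4) unfolding abs_prod by simp
qed

lemma signless_lap_zero_at_max_vertex:
  fixes x :: "nat \<Rightarrow> real"
  assumes E: "uniform_hypergraph n k E" and "even (k - 1)"
    and i: "i \<in> {1..n}" "\<forall>j\<in>{1..n}. \<bar>x j\<bar> \<le> \<bar>x i\<bar>"
    and zero: "signless_lap_apply k E x i = 0"
    and e: "e \<in> edges_at E i"
  shows "(\<Prod>l\<in>e - {i}. x l) = - (\<bar>x i\<bar> ^ (k - 1))"
proof -
  let ?t = "\<lambda>e. \<bar>x i\<bar> ^ (k - 1) + (\<Prod>l\<in>e - {i}. x l)"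
  have "finite (edges_at E i)"
    using uniform_hypergraph_finite_edges[OF E] unfolding edges_at_def by simp
  moreover have "sum ?t (edges_at E i) = 0"
    using zero \<open>even (k - 1)\<close>
    by (simp add: signless_lap_apply_def degree_def sum.distrib power_even_abs)
  moreover have "?t e' \<ge> 0" if "e' \<in> edges_at E i" for e'
  proof -
    have e': "e' \<in> E" "i \<in> e'"
      using that unfolding edges_at_def by auto
    note edge = uniform_hypergraph_edge[OF E e'(1)]
    have "\<bar>\<Prod>l\<in>e' - {i}. x l\<bar> \<le> (\<Prod>l\<in>e' - {i}. \<bar>x i\<bar>)"
      unfolding abs_prod using edge i(2) by (intro prod_mono) auto
    also have "\<dots> = \<bar>x i\<bar> ^ (k - 1)"
      using edge e'(2) by simp
    finally show ?thesis
      by linarith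
  qed
  ultimately have "?t e = 0"
    using e by (simp add: sum_nonneg_eq_0_iff)
  then show ?thesis
    by linarith
qed

lemma ex_arg_max_if_finite:
  fixes f :: "'a \<Rightarrow> 'b::linorder"
  assumes "finite S" "S \<noteq> {}"
  obtains a where "a \<in> S" "\<forall>b\<in>S. f b \<le> f a"
proof -
  have "Max (f ` S) \<in> f ` S"
    using assms by (intro Max_in) auto
  then obtain a where "a \<in> S" "f a = Max (f ` S)"
    by auto
  then show ?thesis
    using that assms(1) by simp
qed

context
  fixes n k :: nat and E :: "nat set set" and x :: "nat \<Rightarrow> real" and i :: nat
  assumes uniform: "uniform_hypergraph n k E" and even: "even (k - 1)"
    and null: "\<forall>j\<in>{1..n}. signless_lap_apply k E x j = 0"
    and max: "i \<in> {1..n}" "\<forall>j\<in>{1..n}. \<bar>x j\<bar> \<le> \<bar>x i\<bar>"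
begin

lemma prod_edge_at_max_vertex:
  assumes "e \<in> E" "j \<in> e" "\<bar>x j\<bar> = \<bar>x i\<bar>"
  shows "(\<Prod>l\<in>e - {j}. x l) = - (\<bar>x i\<bar> ^ (k - 1))"
proof -
  have "j \<in> {1..n}"
    using uniform_hypergraph_edge(2)[OF uniform assms(1)] assms(2) by blast
  moreover have "e \<in> edges_at E j"
    using assms(1,2) unfolding edges_at_def by simp
  ultimately show ?thesis
    using signless_lap_zero_at_max_vertex[OF uniform even, of j x e] null max(2) assms(3)
    by simp
qed

lemma abs_eq_max_on_edge:
  assumes "e \<in> E" "i \<in> e" "j \<in> e"
  shows "\<bar>x j\<bar> = \<bar>x i\<bar>"
proof (cases "j = i")
  case False
  note edge = uniform_hypergraph_edge[OF uniform assms(1)]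
  have "finite (e - {i})" "j \<in> e - {i}"
    using edge(1) assms(3) False by auto
  moreover have "\<forall>l\<in>e - {i}. \<bar>x l\<bar> \<le> \<bar>x i\<bar>"
    using edge(2) max(2) by auto
  moreover have "\<bar>\<Prod>l\<in>e - {i}. x l\<bar> = \<bar>x i\<bar> ^ card (e - {i})"
    using prod_edge_at_max_vertex[OF assms(1,2)] edge assms(2) by simp
  ultimately show ?thesis
    by (rule abs_eq_if_prod_abs_eq_power)
qed simp

lemma eq_max_on_edge:
  assumes "x i \<noteq> 0" "e \<in> E" "i \<in> e" "j \<in> e"
  shows "x j = x i"
proof -
  have "finite e"
    using uniform_hypergraph_edge(1)[OF uniform assms(2)] .
  then have "x j * (\<Prod>l\<in>e - {j}. x l) = x i * (\<Prod>l\<in>e - {i}. x l)"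
    using assms(3,4) by (simp add: prod.remove[symmetric])
  moreover have "\<bar>x j\<bar> = \<bar>x i\<bar>"
    using abs_eq_max_on_edge[OF assms(2-4)] .
  ultimately show ?thesis
    using prod_edge_at_max_vertex[OF assms(2)] assms by simp
qed

lemma max_vertex_on_edge_eq_zero:
  assumes "e \<in> E" "i \<in> e"
  shows "x i = 0"
proof (rule ccontr)
  assume "x i \<noteq> 0"
  note edge = uniform_hypergraph_edge[OF uniform assms(1)]
  have "(\<Prod>l\<in>e - {i}. x l) = (\<Prod>l\<in>e - {i}. x i)"
    using eq_max_on_edge[OF \<open>x i \<noteq> 0\<close> assms] by simp
  also have "\<dots> = \<bar>x i\<bar> ^ (k - 1)"
    using edge assms(2) even by (simp add: power_even_abs)
  finally show False
    using prod_edge_at_max_vertex[OF assms refl] \<open>x i \<noteq> 0\<close> by simp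
qed

end

theorem proposition5p4:
  fixes n k :: nat and E :: "nat set set"
  assumes "k \<ge> 3" and "odd k"
    and "uniform_hypergraph n k E"
    and "hg_connected n E"
    and "E \<noteq> {}"
  shows "\<not> is_H_eigenvalue_signless_lap n k E 0"
proof
  assume "is_H_eigenvalue_signless_lap n k E 0"
  then obtain x :: "nat \<Rightarrow> real" where nonzero: "\<exists>j\<in>{1..n}. x j \<noteq> 0"
    and null: "\<forall>j\<in>{1..n}. signless_lap_apply k E x j = 0"
    unfolding is_H_eigenvalue_signless_lap_def by auto
  have even: "even (k - 1)" and n: "n \<ge> 2"
    using assms(1-3) unfolding uniform_hypergraph_def by auto
  obtain i where max: "i \<in> {1..n}" "\<forall>j\<in>{1..n}. \<bar>x j\<bar> \<le> \<bar>x i\<bar>"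
    using ex_arg_max_if_finite[of "{1..n}" "\<lambda>j. \<bar>x j\<bar>"] n by auto
  obtain e where "e \<in> E" "i \<in> e"
    using hg_connected_vertex_in_edge[OF assms(4) n max(1)] .
  then have "x i = 0"
    by (rule max_vertex_on_edge_eq_zero[OF assms(3) even null max])
  then show False
    using nonzero max(2) by fastforce
qed

end
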